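(* In every state $\mathbf{x}$ of the common-chunk-protocol Markov process (with $k\ge 2$ chunks and any $\lambda>0$), for every chunk $i\in\{1,\dots,k\}$, \[ r \;\ge\; \frac{2\,\bar S_i^{\,3}\, S_i}{3\,S^3}. \]
   Context: Model: Fix an integer $k\ge 2$ (number of chunks of a file) and $\lambda>0$. There is always exactly one seed holding all $k$ chunks. Non-seed peers arrive according to a Poisson process of rate $\lambda$, each arriving with no chunks; each non-seed peer holds a subset (its profile) of $\{1,\dots,k\}$ and leaves the system immediately once it holds all $k$ chunks. The state $\mathbf{x}$ of the continuous-time Markov process is the number of non-seed peers with each profile. $S$ denotes the total number of peers present, including the seed. Each non-seed peer has an independent rate-1 Poisson clock; at each tick it draws a sample of peers independently and uniformly at random with replacement from the current $S$ peers (seed and itself included) and may instantaneously download at most one chunk that it lacks and that is held by some sampled peer (such a chunk is a "match"). Counting draws with multiplicity, a chunk is "rare" in a sample of 3 draws if exactly one of the 3 draws holds it. Common chunk protocol: (i) a peer with no chunks draws 3 peers and downloads a chunk chosen uniformly among the rare matches, if there is any, otherwise nothing; (ii) a peer holding at least 1 and at most $k-2$ chunks draws 1 peer and downloads a uniformly chosen match, if any, otherwise nothing; (iii) a peer holding exactly $k-1$ chunks draws 3 peers and downloads its missing chunk only if that chunk is held by some draw and every chunk it holds is held by at least 2 of the 3 draws; otherwise nothing. Notation: $S_i$ ($1\le i\le k$) is the number of peers, including the seed, holding chunk $i$; $\bar S_i=S-S_i$. $r=r(\mathbf{x})$ is the total rate of download events in state $\mathbf{x}$, i.e. the sum over all non-seed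 peers of the probability that a clock tick of that peer results in a download. *)

theory Defs
  imports Complex_Main
begin

text \<open>A profile is a subset of {1..k}. A state x assigns to each
profile the number of non-seed peers with that profile; only proper subsets of
{1..k} are non-seed profiles (peers holding all chunks leave). The seed is the
unique peer with profile {1..k}.\<close>

definition profiles :: "nat \<Rightarrow> nat set set" where
  "profiles k = {A. A \<subseteq> {1..k} \<and> A \<noteq> {1..k}}"

text \<open>Number of peers (including the seed) with profile B, for B \<subseteq> {1..k}.\<close>
definition wt :: "nat \<Rightarrow> (nat set \<Rightarrow> nat) \<Rightarrow> nat set \<Rightarrow> nat" where
  "wt k x B = (if B = {1..k} then 1 else x B)"

definition totS :: "nat \<Rightarrow> (nat set \<Rightarrow> nat) \<Rightarrow> nat" where
  "totS k x = (\<Sum>B\<in>Pow {1..k}. wt k x B)"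

definition holdS :: "nat \<Rightarrow> (nat set \<Rightarrow> nat) \<Rightarrow> nat \<Rightarrow> nat" where
  "holdS k x i = (\<Sum>B\<in>{B\<in>Pow {1..k}. i \<in> B}. wt k x B)"

definition lackS :: "nat \<Rightarrow> (nat set \<Rightarrow> nat) \<Rightarrow> nat \<Rightarrow> nat" where
  "lackS k x i = totS k x - holdS k x i"

text \<open>Probability that a single uniform draw (with replacement) yields a peer of profile B.\<close>
definition drawp :: "nat \<Rightarrow> (nat set \<Rightarrow> nat) \<Rightarrow> nat set \<Rightarrow> real" where
  "drawp k x B = real (wt k x B) / real (totS k x)"

definition cnt3 :: "nat \<Rightarrow> nat set \<Rightarrow> nat set \<Rightarrow> nat set \<Rightarrow> nat" where
  "cnt3 j B1 B2 B3 = (if j \<in> B1 then 1 else 0) + (if j \<in> B2 then 1 else 0) + (if j \<in> B3 then 1 else 0)"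

text \<open>Probability that a clock tick of a peer with profile A results in a download
under the common chunk protocol.\<close>
definition dlprob :: "nat \<Rightarrow> (nat set \<Rightarrow> nat) \<Rightarrow> nat set \<Rightarrow> real" where
  "dlprob k x A =
    (if card A = 0 then
       (\<Sum>B1\<in>Pow {1..k}. \<Sum>B2\<in>Pow {1..k}. \<Sum>B3\<in>Pow {1..k}.
          drawp k x B1 * drawp k x B2 * drawp k x B3 *
          (if (\<exists>j\<in>{1..k}. j \<notin> A \<and> cnt3 j B1 B2 B3 = 1) then 1 else 0))
     else if card A \<le> k - 2 then
       (\<Sum>B\<in>Pow {1..k}. drawp k x B * (if (\<exists>j\<in>B. j \<notin> A) then 1 else 0))
     else
       (\<Sum>B1\<in>Pow {1..k}. \<Sum>B2\<in>Pow {1..k}. \<Sum>B3\<in>Pow {1..k}.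
          drawp k x B1 * drawp k x B2 * drawp k x B3 *
          (if (\<exists>j\<in>{1..k}. j \<notin> A \<and> 1 \<le> cnt3 j B1 B2 B3) \<and>
              (\<forall>j\<in>A. 2 \<le> cnt3 j B1 B2 B3) then 1 else 0)))"

definition dlrate :: "nat \<Rightarrow> (nat set \<Rightarrow> nat) \<Rightarrow> real" where
  "dlrate k x = (\<Sum>A\<in>profiles k. real (x A) * dlprob k x A)"

end

theory Submission
  imports Defs
begin

(*
  Write S for the number of peers, h = S_i/S and l = (S - S_i)/S for the
  probabilities that a single uniform draw holds, resp. lacks, chunk i, and
  q = x(A0)/S for the probability that a draw has the profile A0 = {1..k} - {i}.
  Only peers lacking chunk i are counted, and each of them downloads with probability:
   - at least h*l^2 if it holds no chunk (draw 1 holds i, draws 2 and 3 lack it,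
     so chunk i is rare),
   - at least h >= h*l^2 if it holds between 1 and k-2 chunks (the draw holds i),
   - at least 3*h*q^2 if its profile is A0 (one draw holds i, the other two are A0).
  Summing, r >= x(A0)*3hq^2 + (S-S_i - x(A0))*hl^2, and the cubic estimate
  3a^3 + (b-a)b^2 >= 2b^3/3 (for a, b >= 0) turns this into the claimed bound.
*)

lemma sum_triple_product:
  fixes a b c :: "'a \<Rightarrow> 'b::comm_semiring_0"
  shows "(\<Sum>B1\<in>P. \<Sum>B2\<in>P. \<Sum>B3\<in>P. a B1 * b B2 * c B3) = sum a P * sum b P * sum c P"
proof -
  have "sum a P * sum b P * sum c P = (\<Sum>B1\<in>P. \<Sum>B2\<in>P. a B1 * b B2) * sum c P"
    by (simp add: sum_product)
  also have "\<dots> = (\<Sum>B1\<in>P. \<Sum>B2\<in>P. a B1 * b B2 * sum c P)"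
    by (simp add: sum_distrib_right)
  also have "\<dots> = (\<Sum>B1\<in>P. \<Sum>B2\<in>P. \<Sum>B3\<in>P. a B1 * b B2 * c B3)"
    by (simp add: sum_distrib_left)
  finally show ?thesis by simp
qed

lemma sum_triple_weight_mono:
  fixes d :: "'a \<Rightarrow> real"
  assumes "\<And>B. B \<in> P \<Longrightarrow> 0 \<le> d B"
    and "\<And>B1 B2 B3. \<lbrakk>B1 \<in> P; B2 \<in> P; B3 \<in> P\<rbrakk> \<Longrightarrow>
           w B1 B2 B3 \<le> (if C B1 B2 B3 then 1 else 0)"
  shows "(\<Sum>B1\<in>P. \<Sum>B2\<in>P. \<Sum>B3\<in>P. d B1 * d B2 * d B3 * w B1 B2 B3)
       \<le> (\<Sum>B1\<in>P. \<Sum>B2\<in>P. \<Sum>B3\<in>P. d B1 * d B2 * d B3 * (if C B1 B2 B3 then 1 else 0))"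
  using assms by (intro sum_mono mult_left_mono) (auto intro: mult_nonneg_nonneg)

definition holders :: "nat \<Rightarrow> nat \<Rightarrow> nat set set" where
  "holders k i = {B \<in> Pow {1..k}. i \<in> B}"

definition lackers :: "nat \<Rightarrow> nat \<Rightarrow> nat set set" where
  "lackers k i = {B \<in> Pow {1..k}. i \<notin> B}"

definition drawmass :: "nat \<Rightarrow> (nat set \<Rightarrow> nat) \<Rightarrow> nat set set \<Rightarrow> real" where
  "drawmass k x X = (\<Sum>B\<in>Pow {1..k}. drawp k x B * (if B \<in> X then 1 else 0))"

text \<open>The seed is always present, so draws are well defined.\<close>
lemma totS_pos: "0 < totS k x"
proof -
  have "wt k x {1..k} \<le> totS k x"
    unfolding totS_def by (rule member_le_sum) auto
  thus ?thesis by (simp add: wt_def)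
qed

lemma drawp_nonneg: "0 \<le> drawp k x B"
  by (simp add: drawp_def)

lemma drawmass_nonneg: "0 \<le> drawmass k x X"
  unfolding drawmass_def by (intro sum_nonneg) (simp add: drawp_nonneg)

lemma drawmass_eq:
  assumes "X \<subseteq> Pow {1..k}"
  shows "drawmass k x X = real (sum (wt k x) X) / real (totS k x)"
proof -
  have "drawmass k x X = sum (drawp k x) (Pow {1..k} \<inter> X)"
    unfolding drawmass_def by (simp add: sum.inter_restrict if_distrib cong: if_cong)
  also have "Pow {1..k} \<inter> X = X" using assms by auto
  finally show ?thesis by (simp add: drawp_def sum_divide_distrib)
qed

lemma drawmass_le_one: "drawmass k x X \<le> 1"
proof -
  have "drawmass k x X \<le> drawmass k x (Pow {1..k})"
    unfolding drawmass_def by (intro sum_mono) (simp add: drawp_nonneg)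
  also have "\<dots> = 1"
    using drawmass_eq[of "Pow {1..k}" k x, folded totS_def] totS_pos[of k x] by simp
  finally show ?thesis .
qed

lemma drawmass_box:
  "(\<Sum>B1\<in>Pow {1..k}. \<Sum>B2\<in>Pow {1..k}. \<Sum>B3\<in>Pow {1..k}.
      drawp k x B1 * drawp k x B2 * drawp k x B3 *
      ((if B1 \<in> X1 then 1 else 0) * (if B2 \<in> X2 then 1 else 0) * (if B3 \<in> X3 then 1 else 0)))
   = drawmass k x X1 * drawmass k x X2 * drawmass k x X3"
  unfolding drawmass_def sum_triple_product[symmetric] by (simp add: ac_simps)

lemma drawmass_holders: "drawmass k x (holders k i) = real (holdS k x i) / real (totS k x)"
  unfolding holdS_def holders_def[symmetric] by (rule drawmass_eq) (auto simp: holders_def)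

lemma lackS_eq_lackers:
  assumes "i \<in> {1..k}"
  shows "lackS k x i = sum (wt k x) (lackers k i)" and "lackS k x i = sum x (lackers k i)"
proof -
  have fin: "finite (holders k i)" "finite (lackers k i)"
    by (auto simp: holders_def lackers_def)
  have "Pow {1..k} = holders k i \<union> lackers k i"
    by (auto simp: holders_def lackers_def)
  hence "totS k x = sum (wt k x) (holders k i \<union> lackers k i)"
    by (simp add: totS_def)
  also have "\<dots> = holdS k x i + sum (wt k x) (lackers k i)"
    using fin by (subst sum.union_disjoint) (auto simp: holders_def lackers_def holdS_def)
  finally show wt_eq: "lackS k x i = sum (wt k x) (lackers k i)"
    by (simp add: lackS_def)
  have "wt k x B = x B" if "B \<in> lackers k i" for B
    using assms that by (auto simp: lackers_def wt_def)
  thus "lackS k x i = sum x (lackers k i)"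
    unfolding wt_eq by (rule sum.cong[OF refl])
qed

lemma drawmass_lackers:
  assumes "i \<in> {1..k}"
  shows "drawmass k x (lackers k i) = real (lackS k x i) / real (totS k x)"
  unfolding lackS_eq_lackers(1)[OF assms] by (rule drawmass_eq) (auto simp: lackers_def)

text \<open>Download probabilities are probabilities; needed to drop the profiles holding i.\<close>
lemma dlprob_nonneg: "0 \<le> dlprob k x A"
  unfolding dlprob_def by (auto intro!: sum_nonneg mult_nonneg_nonneg simp: drawp_nonneg)

text \<open>A peer without chunks downloads chunk i whenever the first draw holds it and the
  other two lack it, since then i is rare in the sample.\<close>
lemma dlprob_empty_lower:
  assumes "i \<in> {1..k}"
  shows "drawmass k x (holders k i) * drawmass k x (lackers k i) ^ 2 \<le> dlprob k x {}"
proof -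
  let ?box = "\<lambda>B1 B2 B3. (if B1 \<in> holders k i then 1 else 0) *
    (if B2 \<in> lackers k i then 1 else 0) * (if B3 \<in> lackers k i then 1 else (0::real))"
  let ?rare = "\<lambda>B1 B2 B3. \<exists>j\<in>{1..k}. cnt3 j B1 B2 B3 = 1"
  have rare: "?box B1 B2 B3 \<le> (if ?rare B1 B2 B3 then 1 else 0)" for B1 B2 B3
  proof (cases "B1 \<in> holders k i \<and> B2 \<in> lackers k i \<and> B3 \<in> lackers k i")
    case True
    hence "cnt3 i B1 B2 B3 = 1" by (auto simp: holders_def lackers_def cnt3_def)
    thus ?thesis using True assms by auto
  qed auto
  have "drawmass k x (holders k i) * drawmass k x (lackers k i) ^ 2
      = drawmass k x (holders k i) * drawmass k x (lackers k i) * drawmass k x (lackers k i)"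
    by (simp add: power2_eq_square)
  also have "\<dots> = (\<Sum>B1\<in>Pow {1..k}. \<Sum>B2\<in>Pow {1..k}. \<Sum>B3\<in>Pow {1..k}.
           drawp k x B1 * drawp k x B2 * drawp k x B3 * ?box B1 B2 B3)"
    by (rule drawmass_box[symmetric])
  also have "\<dots> \<le> (\<Sum>B1\<in>Pow {1..k}. \<Sum>B2\<in>Pow {1..k}. \<Sum>B3\<in>Pow {1..k}.
           drawp k x B1 * drawp k x B2 * drawp k x B3 * (if ?rare B1 B2 B3 then 1 else 0))"
    by (rule sum_triple_weight_mono) (rule drawp_nonneg, rule rare)
  also have "\<dots> = dlprob k x {}" by (simp add: dlprob_def)
  finally show ?thesis .
qed

text \<open>A peer with between 1 and k-2 chunks, lacking i, downloads whenever its single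
  draw holds chunk i.\<close>
lemma dlprob_middle_lower:
  assumes "card A \<noteq> 0" "card A \<le> k - 2" "i \<notin> A"
  shows "drawmass k x (holders k i) \<le> dlprob k x A"
  unfolding dlprob_def drawmass_def using assms
  by (auto intro!: sum_mono mult_left_mono simp: drawp_nonneg holders_def)

text \<open>A peer with profile {1..k} - {i} downloads chunk i whenever one draw holds i and
  the other two draws have its own profile; the three positions give disjoint events.\<close>
lemma dlprob_almost_full_lower:
  assumes "k \<ge> 2" "i \<in> {1..k}"
  shows "3 * drawmass k x (holders k i) * drawmass k x {{1..k} - {i}} ^ 2
           \<le> dlprob k x ({1..k} - {i})"
proof -
  define A0 where "A0 = {1..k} - {i}"
  let ?H = "\<lambda>B. if B \<in> holders k i then 1 else (0::real)"
  let ?O = "\<lambda>B. if B \<in> {A0} then 1 else (0::real)"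
  let ?w = "\<lambda>B1 B2 B3. ?H B1 * ?O B2 * ?O B3 + ?O B1 * ?H B2 * ?O B3 + ?O B1 * ?O B2 * ?H B3"
  let ?E = "\<lambda>B1 B2 B3. (\<exists>j\<in>{1..k}. j \<notin> A0 \<and> 1 \<le> cnt3 j B1 B2 B3) \<and>
                          (\<forall>j\<in>A0. 2 \<le> cnt3 j B1 B2 B3)"
  let ?T = "\<lambda>f. \<Sum>B1\<in>Pow {1..k}. \<Sum>B2\<in>Pow {1..k}. \<Sum>B3\<in>Pow {1..k}.
                  drawp k x B1 * drawp k x B2 * drawp k x B3 * f B1 B2 B3"
  have A0_not_holder: "A0 \<notin> holders k i" by (simp add: A0_def holders_def)
  have event: "?w B1 B2 B3 \<le> (if ?E B1 B2 B3 then 1 else 0)" for B1 B2 B3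
  proof (cases "(B1 \<in> holders k i \<and> B2 = A0 \<and> B3 = A0) \<or> (B1 = A0 \<and> B2 \<in> holders k i \<and> B3 = A0)
                \<or> (B1 = A0 \<and> B2 = A0 \<and> B3 \<in> holders k i)")
    case True
    hence "?E B1 B2 B3"
      using assms(2) by (intro conjI bexI[of _ i]) (auto simp: holders_def cnt3_def A0_def)
    thus ?thesis using True A0_not_holder by auto
  qed (use A0_not_holder in auto)
  let ?h = "drawmass k x (holders k i)" and ?q = "drawmass k x {A0}"
  have "3 * ?h * ?q ^ 2 = ?h * ?q * ?q + ?q * ?h * ?q + ?q * ?q * ?h"
    by (simp add: power2_eq_square)
  also have "\<dots> = ?T (\<lambda>B1 B2 B3. ?H B1 * ?O B2 * ?O B3) + ?T (\<lambda>B1 B2 B3. ?O B1 * ?H B2 * ?O B3)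
      + ?T (\<lambda>B1 B2 B3. ?O B1 * ?O B2 * ?H B3)"
    by (simp only: drawmass_box)
  also have "\<dots> = ?T ?w"
    by (simp add: sum.distrib distrib_left)
  also have "\<dots> \<le> ?T (\<lambda>B1 B2 B3. if ?E B1 B2 B3 then 1 else 0)"
    by (rule sum_triple_weight_mono) (rule drawp_nonneg, rule event)
  also have "\<dots> = dlprob k x A0"
  proof -
    have "card A0 = k - 1" using assms(2) by (simp add: A0_def)
    thus ?thesis using assms(1) by (simp add: dlprob_def)
  qed
  finally show ?thesis by (simp add: A0_def)
qed

lemma lacking_profile_cases:
  assumes "i \<in> {1..k}" "A \<in> lackers k i" "A \<noteq> {1..k} - {i}"
  obtains "A = {}" | "card A \<noteq> 0" "card A \<le> k - 2"
proof -
  have "A \<subset> {1..k} - {i}" using assms(2,3) by (auto simp: lackers_def)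
  hence "card A < card ({1..k} - {i})" by (intro psubset_card_mono) auto
  also have "\<dots> = k - 1" using assms(1) by simp
  finally have "card A \<le> k - 2" by simp
  moreover have "finite A" using assms(2) by (auto simp: lackers_def intro: finite_subset)
  ultimately show ?thesis using that by (cases "card A = 0") simp_all
qed

lemma dlprob_lacker_lower:
  assumes "i \<in> {1..k}" "A \<in> lackers k i" "A \<noteq> {1..k} - {i}"
  shows "drawmass k x (holders k i) * drawmass k x (lackers k i) ^ 2 \<le> dlprob k x A"
  using assms(1,2,3)
proof (cases rule: lacking_profile_cases)
  case 1
  thus ?thesis using dlprob_empty_lower[OF assms(1)] by simp
next
  case 2
  have "drawmass k x (holders k i) * drawmass k x (lackers k i) ^ 2 \<le> drawmass k x (holders k i)"
    by (intro mult_left_le power_le_one drawmass_nonneg drawmass_le_one)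
  also have "\<dots> \<le> dlprob k x A"
    using 2 assms(2) by (intro dlprob_middle_lower) (auto simp: lackers_def)
  finally show ?thesis .
qed

text \<open>Only peers lacking chunk i are counted, each with the bound established above.\<close>
lemma dlrate_lower:
  fixes x :: "nat set \<Rightarrow> nat"
  assumes "k \<ge> 2" "i \<in> {1..k}"
  defines "A0 \<equiv> {1..k} - {i}"
    and "h \<equiv> drawmass k x (holders k i)"
    and "l \<equiv> drawmass k x (lackers k i)"
    and "q \<equiv> drawmass k x {{1..k} - {i}}"
  shows "real (x A0) * (3 * h * q ^ 2) + (\<Sum>A\<in>lackers k i - {A0}. real (x A)) * (h * l ^ 2)
           \<le> dlrate k x"
proof -
  have fin: "finite (lackers k i)" by (simp add: lackers_def)
  have A0: "A0 \<in> lackers k i" by (auto simp: A0_def lackers_def)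
  have "real (x A0) * (3 * h * q ^ 2) + (\<Sum>A\<in>lackers k i - {A0}. real (x A)) * (h * l ^ 2)
          \<le> (\<Sum>A\<in>lackers k i. real (x A) * dlprob k x A)"
    unfolding sum.remove[OF fin A0] sum_distrib_right h_def l_def q_def A0_def
    using dlprob_almost_full_lower[OF assms(1,2)] dlprob_lacker_lower[OF assms(2)]
    by (intro add_mono sum_mono mult_left_mono) auto
  also have "\<dots> \<le> dlrate k x"
    unfolding dlrate_def using assms(2)
    by (intro sum_mono2) (auto simp: profiles_def lackers_def dlprob_nonneg)
  finally show ?thesis .
qed

text \<open>The elementary estimate converting the rate bound into the stated form:
  3a^3 + (b-a)b^2 - 2b^3/3 = (a - b/3)^2 (3a + 2b) + b^3/9.\<close>
lemma cubic_mixing_bound: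
  fixes a b :: real
  assumes "0 \<le> a" "0 \<le> b"
  shows "2 * b ^ 3 / 3 \<le> 3 * a ^ 3 + (b - a) * b ^ 2"
proof -
  have "3 * a ^ 3 + (b - a) * b ^ 2 - 2 * b ^ 3 / 3 = (a - b/3)^2 * (3*a + 2*b) + b^3/9"
    by (simp add: algebra_simps power2_eq_square power3_eq_cube)
  also have "\<dots> \<ge> 0" using assms by (intro add_nonneg_nonneg mult_nonneg_nonneg) auto
  finally show ?thesis by simp
qed

theorem mainTheorem3:
  fixes k :: nat and lam :: real and x :: "nat set \<Rightarrow> nat" and i :: nat
  assumes "k \<ge> 2" and "lam > 0" and "i \<in> {1..k}"
  shows "dlrate k x \<ge>
    2 * real (lackS k x i) ^ 3 * real (holdS k x i) / (3 * real (totS k x) ^ 3)"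
proof -
  define A0 where "A0 = {1..k} - {i}"
  define S where "S = real (totS k x)"
  define n0 where "n0 = real (x A0)"
  define rest where "rest = (\<Sum>A\<in>lackers k i - {A0}. real (x A))"
  have S_pos: "S > 0" using totS_pos by (simp add: S_def)
  have A0: "A0 \<in> lackers k i" by (auto simp: A0_def lackers_def)
  have lack_split: "real (lackS k x i) = n0 + rest"
    unfolding lackS_eq_lackers(2)[OF assms(3)] n0_def rest_def of_nat_sum
    by (rule sum.remove[OF _ A0]) (simp add: lackers_def)
  have q: "drawmass k x {A0} = n0 / S"
    using A0 assms(3) by (auto simp: drawmass_eq S_def n0_def lackers_def wt_def)
  let ?Sb = "real (lackS k x i)" and ?Si = "real (holdS k x i)"
  have "2 * ?Sb ^ 3 * ?Si / (3 * S ^ 3) = ?Si / S ^ 3 * (2 * ?Sb ^ 3 / 3)"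
    by (simp add: field_simps)
  also have "\<dots> \<le> ?Si / S ^ 3 * (3 * n0 ^ 3 + (?Sb - n0) * ?Sb ^ 2)"
    using S_pos by (intro mult_left_mono cubic_mixing_bound) (simp_all add: n0_def)
  also have "\<dots> = n0 * (3 * (?Si / S) * (n0 / S) ^ 2) + rest * ((?Si / S) * (?Sb / S) ^ 2)"
    using S_pos lack_split by (simp add: field_simps power2_eq_square power3_eq_cube)
  also have "\<dots> \<le> dlrate k x"
    using dlrate_lower[OF assms(1,3), of x] q
    by (simp add: drawmass_holders drawmass_lackers[OF assms(3)] A0_def n0_def rest_def S_def)
  finally show ?thesis by (simp add: S_def)
qed

end
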